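(* Fix $d \in \mathbb{N}$, $0<\eta \le \tfrac12$ and $j \in \mathbb{N}$. Let $\mathcal{C} \subset \mathcal{D}_j$ and let $\mathcal{C} = \mathcal{C}_1 \cup \dots \cup \mathcal{C}_d$ be a fixed $(\eta,d)$-homogeneous colouring of $\mathcal{C}$. Let $\mathcal{U} \subset \mathcal{D}_j$ with $\mathcal{U} \cap \mathcal{C} = \emptyset$ be such that the pair $(\mathcal{C},\mathcal{U})$ is $d$-previsible. Then there is a colouring $\mathcal{U} = \mathcal{U}_1 \cup \dots \cup \mathcal{U}_d$ of $\mathcal{U}$ such that $\{\mathcal{H}_i = \mathcal{C}_i \cup \mathcal{U}_i : 1 \le i \le d\}$ is an $(\eta,d)$-homogeneous colouring of $\mathcal{H} = \mathcal{C} \cup \mathcal{U}$.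
   Context: $\mathcal{D}$ denotes the collection of dyadic subintervals of $[0,1]$ and $\mathcal{D}_j = \{I \in \mathcal{D} : |I| = 2^{-j}\}$. For a collection $\mathcal{A}$ of dyadic intervals and $L \in \mathcal{D}$, write $\mathcal{A} \cap L = \{I \in \mathcal{A} : I \subset L\}$, and $|\mathcal{A}|$ for the cardinality of $\mathcal{A}$. A colouring of a collection $\mathcal{A}$ with $d$ colours is a decomposition $\mathcal{A} = \mathcal{A}_1 \cup \dots \cup \mathcal{A}_d$ into pairwise disjoint (possibly empty) subcollections ($\mathcal{A}_i$ = intervals of colour $i$). For $\mathcal{A} \subset \mathcal{D}_j$, $d \in \mathbb{N}$, $0<\eta\le \tfrac12$, such a decomposition is called an $(\eta,d)$-homogeneous colouring if for every $L \in \mathcal{D}$ with $|L| \ge 2^{-j}$ one of the following holds: either $|\mathcal{A} \cap L| > d$ and $\eta \max_{1\le i\le d} |\mathcal{A}_i \cap L| \le \min_{1 \le i \le d} |\mathcal{A}_i \cap L|$; or $|\mathcal{A} \cap L| \le d$ and $|\mathcal{A}_i \cap L| \le 1$ for each $1 \le i \le d$. For disjoint $\mathcal{C}, \mathcal{U} \subset \mathcal{D}_j$ and $d \in \mathbb{N}$, the pair $(\mathcal{C},\mathcal{U})$ is called $d$-previsible if for every $L \in \mathcal{D}$ with $|L| \ge 2^{-(j-1)}$ and its two dyadic children $L', L''$ (i.e. $L', L'' \in \mathcal{D}$, $L = L' \cup L''$, $|L'| = |L''| = |L|/2$, in either order), the conditions $|(\mathcal{U}\cup\mathcal{C}) \cap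 L'| < d$ and $|(\mathcal{U}\cup\mathcal{C}) \cap L''| \ge d$ imply $\mathcal{U} \cap L'' = \emptyset$ or $\mathcal{C} \cap L'' = \emptyset$. *)

theory Defs
  imports Complex_Main
begin

text \<open>A dyadic subinterval of [0,1] is encoded as a pair (k, m) with m < 2^k,
  standing for the interval [m 2^-k, (m+1) 2^-k], of length 2^-k.\<close>

type_synonym dyad = "nat \<times> nat"

definition dyadic :: "dyad set" where
  "dyadic = {(k, m). m < 2 ^ k}"

definition dyadic_level :: "nat \<Rightarrow> dyad set" where
  "dyadic_level j = {(k, m). k = j \<and> m < 2 ^ k}"

text \<open>Inclusion of dyadic intervals: I \<subseteq> L.\<close>
definition dsub :: "dyad \<Rightarrow> dyad \<Rightarrow> bool" where
  "dsub I L \<longleftrightarrow> fst L \<le> fst I \<and> snd I div 2 ^ (fst I - fst L) = snd L"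

definition restr :: "dyad set \<Rightarrow> dyad \<Rightarrow> dyad set" where
  "restr A L = {I \<in> A. dsub I L}"

definition colouring :: "nat \<Rightarrow> (nat \<Rightarrow> dyad set) \<Rightarrow> dyad set \<Rightarrow> bool" where
  "colouring d col A \<longleftrightarrow>
     (\<Union>i\<in>{1..d}. col i) = A \<and>
     (\<forall>i\<in>{1..d}. \<forall>i'\<in>{1..d}. i \<noteq> i' \<longrightarrow> col i \<inter> col i' = {})"

definition homogeneous_colouring ::
  "real \<Rightarrow> nat \<Rightarrow> nat \<Rightarrow> (nat \<Rightarrow> dyad set) \<Rightarrow> dyad set \<Rightarrow> bool" where
  "homogeneous_colouring \<eta> d j col A \<longleftrightarrow>
     A \<subseteq> dyadic_level j \<and> colouring d col A \<and>
     (\<forall>L\<in>dyadic. fst L \<le> j \<longrightarrow>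
        (card (restr A L) > d \<and>
           \<eta> * real (Max ((\<lambda>i. card (restr (col i) L)) ` {1..d}))
             \<le> real (Min ((\<lambda>i. card (restr (col i) L)) ` {1..d})))
        \<or> (card (restr A L) \<le> d \<and> (\<forall>i\<in>{1..d}. card (restr (col i) L) \<le> 1)))"

text \<open>d-previsibility of the pair (C, U) of disjoint subcollections of D_j.
  The children of L = (k, m) are (k+1, 2m) and (k+1, 2m+1); |L| \<ge> 2^-(j-1) means k + 1 \<le> j.\<close>
definition previsible :: "nat \<Rightarrow> nat \<Rightarrow> dyad set \<Rightarrow> dyad set \<Rightarrow> bool" where
  "previsible d j C U \<longleftrightarrow>
     (\<forall>L\<in>dyadic. fst L + 1 \<le> j \<longrightarrow>
       (\<forall>L' L''. {L', L''} = {(fst L + 1, 2 * snd L), (fst L + 1, 2 * snd L + 1)} \<longrightarrow>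
          card (restr (U \<union> C) L') < d \<longrightarrow> card (restr (U \<union> C) L'') \<ge> d \<longrightarrow>
          restr U L'' = {} \<or> restr C L'' = {}))"

end

theory Submission
  imports Defs
begin

text \<open>The colouring of \<open>U\<close> is built bottom-up along the dyadic tree: for every dyadic \<open>L\<close>
  of length at least \<open>2\<^sup>-\<^sup>j\<close> we colour the intervals of \<open>U\<close> inside \<open>L\<close> so that \<open>H\<close> is
  homogeneous at every dyadic interval inside \<open>L\<close>. If \<open>H\<close> has at most \<open>d\<close> intervals inside
  \<open>L\<close>, those of \<open>U\<close> get colours not used by \<open>C\<close> there. Otherwise the colourings built for
  the two children of \<open>L\<close> are joined, and the colour counts of the join must be balanced. This
  is automatic if both children carry more than \<open>d\<close> intervals, and the counts are \<open>1\<close> or \<open>2\<close>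
  if both carry at most \<open>d\<close>. If only one child \<open>P\<close> is small, either it carries exactly \<open>d\<close>
  intervals, one of each colour, or previsibility leaves below the other child \<open>Q\<close> only
  intervals of \<open>C\<close> or only intervals of \<open>U\<close>. If only \<open>C\<close>, the intervals of \<open>U\<close> below \<open>P\<close>
  take the colours of smallest count; if only \<open>U\<close>, the intervals of \<open>U\<close> below \<open>Q\<close> are coloured
  as evenly as possible (recursively, splitting the remainder between the children), with the
  colours receiving an extra interval chosen to complement those used below \<open>P\<close>. Here
  \<open>\<eta> \<le> 1/2\<close> is what makes counts differing by one balanced.\<close>

section \<open>Dyadic intervals\<close>

lemma dsub_refl: "dsub L L"
  by (simp add: dsub_def)

lemma dsub_trans:
  assumes "dsub I L0" "dsub L0 L"
  shows "dsub I L"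
proof -
  obtain a b a0 b0 k m where I: "I = (a, b)" and L0: "L0 = (a0, b0)" and L: "L = (k, m)"
    by (cases I, cases L0, cases L)
  have "k \<le> a0" "a0 \<le> a"
    using assms I L0 L by (auto simp: dsub_def)
  then have "a - k = (a - a0) + (a0 - k)"
    by simp
  then have "b div 2 ^ (a - k) = b div 2 ^ (a - a0) div 2 ^ (a0 - k)"
    by (simp add: power_add div_mult2_eq)
  then show ?thesis
    using assms I L0 L by (auto simp: dsub_def)
qed

lemma dsub_root: "m < 2 ^ k \<Longrightarrow> dsub (k, m) (0, 0)"
  by (simp add: dsub_def)

definition children :: "dyad \<Rightarrow> dyad \<Rightarrow> dyad \<Rightarrow> bool" where
  "children L P Q \<longleftrightarrow>
     (P, Q) = ((Suc (fst L), 2 * snd L), (Suc (fst L), 2 * snd L + 1)) \<or>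
     (P, Q) = ((Suc (fst L), 2 * snd L + 1), (Suc (fst L), 2 * snd L))"

lemma children_sym: "children L P Q \<Longrightarrow> children L Q P"
  by (auto simp: children_def)

lemma children_exist: "children L (Suc (fst L), 2 * snd L) (Suc (fst L), 2 * snd L + 1)"
  by (simp add: children_def)

lemma children_dyadic:
  "children L P Q \<Longrightarrow> L \<in> dyadic \<Longrightarrow> P \<in> dyadic \<and> fst P = Suc (fst L)"
  by (auto simp: children_def dyadic_def)

lemma obtain_children:
  assumes "L \<in> dyadic"
  obtains P Q where "children L P Q" "P \<in> dyadic" "Q \<in> dyadic" "fst P = Suc (fst L)" "fst Q = Suc (fst L)"
  using that[OF children_exist] children_dyadic[OF children_exist assms]
    children_dyadic[OF children_sym[OF children_exist] assms] by blast

lemma children_dyadic_le: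
  assumes "L \<in> dyadic" "fst L < j" "children L P Q"
  shows "P \<in> dyadic" "fst P \<le> j" "Q \<in> dyadic" "fst Q \<le> j"
  using assms children_dyadic[OF assms(3,1)] children_dyadic[OF children_sym[OF assms(3)] assms(1)]
  by simp_all

lemma dsub_children: "children L P Q \<Longrightarrow> dsub P L"
  by (auto simp: children_def dsub_def)

lemma not_dsub_both_children: "children L P Q \<Longrightarrow> dsub I P \<Longrightarrow> \<not> dsub I Q"
  by (auto simp: children_def dsub_def)

lemma dsub_children_iff:
  assumes "children L P Q" "fst L < fst I"
  shows "dsub I L \<longleftrightarrow> dsub I P \<or> dsub I Q"
proof -
  obtain a b k m where I: "I = (a, b)" and L: "L = (k, m)"
    by (cases I, cases L)
  have "a - k = Suc (a - Suc k)"
    using assms(2) I L by simp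
  then have "(2::nat) ^ (a - k) = 2 ^ (a - Suc k) * 2"
    by (simp add: power_Suc2)
  then have "b div 2 ^ (a - k) = b div 2 ^ (a - Suc k) div 2"
    by (simp add: div_mult2_eq)
  moreover have "(t::nat) div 2 = m \<longleftrightarrow> t = 2 * m \<or> t = 2 * m + 1" for t
    by auto
  ultimately have "dsub I L \<longleftrightarrow> dsub I (Suc k, 2 * m) \<or> dsub I (Suc k, 2 * m + 1)"
    using assms(2) I L by (simp add: dsub_def)
  then show ?thesis
    using assms(1) L by (auto simp: children_def)
qed

lemma dsub_cases_children:
  assumes "children L P Q" "dsub I L"
  shows "I = L \<or> dsub I P \<or> dsub I Q"
proof (cases "fst I = fst L")
  case True
  then show ?thesis
    using assms(2) by (cases I, cases L) (auto simp: dsub_def)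
next
  case False
  then have "fst L < fst I"
    using assms(2) by (simp add: dsub_def)
  then show ?thesis
    using assms dsub_children_iff by blast
qed

lemma finite_dyadic_level: "finite (dyadic_level j)"
proof (rule finite_subset)
  show "dyadic_level j \<subseteq> {j} \<times> {..<2 ^ j}"
    by (auto simp: dyadic_level_def)
qed simp

lemma finite_restr: "X \<subseteq> dyadic_level j \<Longrightarrow> finite (restr X L)"
  by (rule finite_subset[OF _ finite_dyadic_level[of j]]) (auto simp: restr_def)

lemma restr_mono: "dsub L0 L \<Longrightarrow> restr X L0 \<subseteq> restr X L"
  by (auto simp: restr_def intro: dsub_trans)

lemma restr_empty [simp]: "restr {} L = {}"
  by (simp add: restr_def)

lemma restr_Un: "restr (A \<union> B) L = restr A L \<union> restr B L"
  by (auto simp: restr_def)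

lemma restr_root: "X \<subseteq> dyadic_level j \<Longrightarrow> restr X (0, 0) = X"
  by (auto simp: restr_def dyadic_level_def dsub_def)

abbreviation cnt :: "dyad set \<Rightarrow> dyad \<Rightarrow> nat" where
  "cnt X L \<equiv> card (restr X L)"

lemma cnt_mono: "X \<subseteq> dyadic_level j \<Longrightarrow> dsub L0 L \<Longrightarrow> cnt X L0 \<le> cnt X L"
  by (rule card_mono[OF finite_restr restr_mono])

lemma restr_children:
  assumes "X \<subseteq> dyadic_level j" "fst L < j" "children L P Q"
  shows "restr X L = restr X P \<union> restr X Q"
  using assms dsub_children_iff[OF assms(3)] by (auto simp: restr_def dyadic_level_def)

lemma restr_children_disjoint:
  assumes "children L P Q"
  shows "restr X P \<inter> restr X Q = {}"
  using not_dsub_both_children[OF assms] by (auto simp: restr_def)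

lemma cnt_children:
  assumes "X \<subseteq> dyadic_level j" "fst L < j" "children L P Q"
  shows "cnt X L = cnt X P + cnt X Q"
  using restr_children[OF assms] restr_children_disjoint[OF assms(3)] finite_restr[OF assms(1)]
  by (simp add: card_Un_disjoint)

lemma cnt_leaf_le_1:
  assumes "X \<subseteq> dyadic_level j" "fst L = j"
  shows "cnt X L \<le> 1"
proof -
  have "restr X L \<subseteq> {L}"
    using assms by (cases L) (auto simp: restr_def dyadic_level_def dsub_def)
  then show ?thesis
    using card_mono[of "{L}"] by fastforce
qed

lemma previsibleD:
  assumes "previsible d j C U" "L \<in> dyadic" "fst L < j" "children L P Q"
    and "cnt (C \<union> U) P < d" "d \<le> cnt (C \<union> U) Q"
  shows "restr U Q = {} \<or> restr C Q = {}"
proof -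
  have "{P, Q} = {(fst L + 1, 2 * snd L), (fst L + 1, 2 * snd L + 1)}"
    using assms(4) by (auto simp: children_def)
  moreover have "U \<union> C = C \<union> U"
    by (rule sup_commute)
  ultimately show ?thesis
    using assms(1-3,5,6) unfolding previsible_def
    by (metis Suc_eq_plus1 Suc_leI)
qed

section \<open>Balanced colour counts\<close>

definition balanced :: "real \<Rightarrow> nat \<Rightarrow> (nat \<Rightarrow> nat) \<Rightarrow> bool" where
  "balanced \<eta> d f \<longleftrightarrow> (\<forall>i\<in>{1..d}. \<forall>k\<in>{1..d}. \<eta> * real (f i) \<le> real (f k))"

lemma balanced_iff_Max_Min:
  assumes "0 < \<eta>" "1 \<le> d"
  shows "balanced \<eta> d f \<longleftrightarrow> \<eta> * real (Max (f ` {1..d})) \<le> real (Min (f ` {1..d}))"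
proof
  assume "balanced \<eta> d f"
  moreover have "f ` {1..d} \<noteq> {}"
    using assms(2) by auto
  then obtain i k where "i \<in> {1..d}" "Max (f ` {1..d}) = f i" "k \<in> {1..d}" "Min (f ` {1..d}) = f k"
    using Max_in[of "f ` {1..d}"] Min_in[of "f ` {1..d}"] by fastforce
  ultimately show "\<eta> * real (Max (f ` {1..d})) \<le> real (Min (f ` {1..d}))"
    by (simp add: balanced_def)
next
  assume bound: "\<eta> * real (Max (f ` {1..d})) \<le> real (Min (f ` {1..d}))"
  show "balanced \<eta> d f"
    unfolding balanced_def
  proof (intro ballI)
    fix i k
    assume "i \<in> {1..d}" "k \<in> {1..d}"
    then have "\<eta> * real (f i) \<le> \<eta> * real (Max (f ` {1..d}))" "Min (f ` {1..d}) \<le> f k"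
      using assms(1) by simp_all
    then show "\<eta> * real (f i) \<le> real (f k)"
      using bound by linarith
  qed
qed

lemma balanced_cong: "(\<And>i. i \<in> {1..d} \<Longrightarrow> f i = g i) \<Longrightarrow> balanced \<eta> d f \<longleftrightarrow> balanced \<eta> d g"
  by (simp add: balanced_def)

lemma balanced_add: "balanced \<eta> d f \<Longrightarrow> balanced \<eta> d g \<Longrightarrow> balanced \<eta> d (\<lambda>i. f i + g i)"
  unfolding balanced_def by (auto simp: distrib_left intro: add_mono)

lemma balanced_Suc: "\<eta> \<le> 1 \<Longrightarrow> balanced \<eta> d f \<Longrightarrow> balanced \<eta> d (\<lambda>i. Suc (f i))"
  unfolding balanced_def by (auto simp: distrib_left intro: add_mono)

lemma mult_Suc_le_half:
  assumes "\<eta> \<le> 1/2" "1 \<le> a"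
  shows "\<eta> * real (Suc a) \<le> real a"
proof -
  have "\<eta> * real (Suc a) \<le> 1/2 * real (Suc a)"
    using assms(1) by (intro mult_right_mono) simp_all
  also have "\<dots> \<le> real a"
    using assms(2) by simp
  finally show ?thesis .
qed

lemma balanced_nearly_constant:
  assumes "0 < \<eta>" "\<eta> \<le> 1/2" "1 \<le> a" "\<And>i. i \<in> {1..d} \<Longrightarrow> a \<le> f i \<and> f i \<le> Suc a"
  shows "balanced \<eta> d f"
  unfolding balanced_def
proof (intro ballI)
  fix i k
  assume "i \<in> {1..d}" "k \<in> {1..d}"
  then have "f i \<le> Suc a" and fk: "a \<le> f k"
    using assms(4) by simp_all
  then have "\<eta> * real (f i) \<le> \<eta> * real (Suc a)"
    using assms(1) by simp
  moreover have "\<eta> * real (Suc a) \<le> real a"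
    using mult_Suc_le_half assms(2,3) .
  ultimately show "\<eta> * real (f i) \<le> real (f k)"
    using fk by linarith
qed

text \<open>A raised entry \<open>i \<in> S\<close> has \<open>x i = v i\<close>; it is compared with another raised entry, with an
  entry in \<open>A\<close> through \<open>v\<close>, or with an entry \<open>x k \<ge> x i\<close>, which absorbs the raise as
  \<open>\<eta> \<le> 1/2\<close> and \<open>x k \<ge> 1\<close>.\<close>

lemma balanced_add_smallest:
  assumes "0 < \<eta>" "\<eta> \<le> 1/2" "balanced \<eta> d x" "balanced \<eta> d v"
    and x: "\<And>i. i \<in> {1..d} \<Longrightarrow> x i = v i + of_bool (i \<in> A)"
    and pos: "\<And>i. i \<in> {1..d} \<Longrightarrow> 1 \<le> x i"
    and S: "S \<subseteq> {1..d} - A" "\<forall>s\<in>S. \<forall>t\<in>{1..d} - A - S. x s \<le> x t"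
  shows "balanced \<eta> d (\<lambda>i. x i + of_bool (i \<in> S))"
  unfolding balanced_def
proof (intro ballI)
  fix i k
  assume i: "i \<in> {1..d}" and k: "k \<in> {1..d}"
  have xik: "\<eta> * real (x i) \<le> real (x k)"
    using assms(3) i k by (simp add: balanced_def)
  show "\<eta> * real (x i + of_bool (i \<in> S)) \<le> real (x k + of_bool (k \<in> S))"
  proof (cases "i \<in> S")
    case False
    then show ?thesis
      using xik by simp
  next
    case iS: True
    then have xi: "x i = v i"
      using x[OF i] S(1) by auto
    consider "k \<in> S" | "k \<in> A" | "k \<in> {1..d} - A - S"
      using k by blast
    then show ?thesis
    proof cases
      case 1
      then show ?thesis
        using xik iS assms(2) by (simp add: distrib_left)
    next
      case 2
      then have "x k = Suc (v k)"
        using x[OF k] by simp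
      moreover have "\<eta> * real (v i) \<le> real (v k)"
        using assms(4) i k by (simp add: balanced_def)
      ultimately show ?thesis
        using xi iS assms(2) by (simp add: distrib_left)
    next
      case 3
      then have "\<eta> * real (x i + 1) \<le> \<eta> * real (x k + 1)"
        using S(2) iS assms(1) by simp
      also have "\<dots> \<le> real (x k)"
        using mult_Suc_le_half[OF assms(2) pos[OF k]] by simp
      finally show ?thesis
        using iS 3 by simp
    qed
  qed
qed

section \<open>Choosing sets of colours\<close>

lemma obtain_subset_between:
  assumes "T \<subseteq> B" "finite B" "card T \<le> n" "n \<le> card B"
  obtains S where "T \<subseteq> S" "S \<subseteq> B" "card S = n"
proof -
  have "finite T"
    using finite_subset[OF assms(1,2)] .
  then have "n - card T \<le> card (B - T)"
    using assms by (simp add: card_Diff_subset)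
  then obtain X where X: "X \<subseteq> B - T" "card X = n - card T" "finite X"
    by (rule obtain_subset_with_card_n)
  then have "card (T \<union> X) = n"
    using \<open>finite T\<close> assms(3) by (subst card_Un_disjoint) auto
  then show ?thesis
    using X(1) assms(1) by (intro that[of "T \<union> X"]) auto
qed

lemma obtain_subset_of_smallest:
  fixes f :: "'a \<Rightarrow> nat"
  assumes "finite B" "n \<le> card B"
  obtains S where "S \<subseteq> B" "card S = n" "\<forall>s\<in>S. \<forall>t\<in>B - S. f s \<le> f t"
proof -
  have "\<exists>S\<subseteq>B. card S = n \<and> (\<forall>s\<in>S. \<forall>t\<in>B - S. f s \<le> f t)"
    using assms(2)
  proof (induction n)
    case 0
    show ?case
      by (intro exI[of _ "{}"]) simp
  next
    case (Suc n)
    then obtain S where S: "S \<subseteq> B" "card S = n" "\<forall>s\<in>S. \<forall>t\<in>B - S. f s \<le> f t"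
      by auto
    have "finite S"
      using finite_subset[OF S(1) assms(1)] .
    then have "card (B - S) = card B - n"
      using card_Diff_subset[OF _ S(1)] S(2) by simp
    then have "0 < card (B - S)"
      using Suc.prems by simp
    then have "finite (B - S)" "B - S \<noteq> {}"
      unfolding card_gt_0_iff by blast+
    then obtain t0 where t0: "t0 \<in> B - S" "f t0 = Min (f ` (B - S))"
      using Min_in[of "f ` (B - S)"] by fastforce
    then have "\<forall>t\<in>B - S. f t0 \<le> f t"
      using \<open>finite (B - S)\<close> by simp
    moreover have "card (insert t0 S) = Suc n"
      using t0(1) S(2) \<open>finite S\<close> by simp
    ultimately show ?case
      using S t0(1) by (intro exI[of _ "insert t0 S"]) auto
  qed
  then show ?thesis
    using that by blast
qed

lemma obtain_partition_with_cards:
  assumes "finite R" "card R = r1 + r2"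
  obtains R1 R2 where "R1 \<union> R2 = R" "R1 \<inter> R2 = {}" "card R1 = r1" "card R2 = r2"
proof -
  obtain R1 where R1: "R1 \<subseteq> R" "card R1 = r1"
    using obtain_subset_with_card_n[of r1 R] assms(2) by auto
  then have "card (R - R1) = r2"
    using card_Diff_subset[OF finite_subset[OF R1(1) assms(1)] R1(1)] assms(2) by simp
  then show ?thesis
    using that[of R1 "R - R1"] R1 by blast
qed

lemma obtain_cover_with_intersection:
  assumes "finite D" "R \<subseteq> D" "card R + card D = r1 + r2" "card R \<le> r1" "card R \<le> r2"
  obtains R1 R2 where "R1 \<union> R2 = D" "R1 \<inter> R2 = R" "card R1 = r1" "card R2 = r2"
proof -
  have "card (D - R) = card D - card R"
    using card_Diff_subset[OF finite_subset[OF assms(2,1)] assms(2)] .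
  then have "card (D - R) = (r1 - card R) + (r2 - card R)"
    using assms(3-5) by linarith
  moreover have "finite (D - R)"
    using assms(1) by simp
  ultimately obtain X Y where XY: "X \<union> Y = D - R" "X \<inter> Y = {}" "card X = r1 - card R" "card Y = r2 - card R"
    using obtain_partition_with_cards by metis
  have "finite R" "finite X" "finite Y"
    using finite_subset[OF assms(2,1)] finite_subset[OF _ \<open>finite (D - R)\<close>] XY(1) by auto
  moreover have "R \<inter> X = {}" "R \<inter> Y = {}"
    using XY(1) by auto
  ultimately have "card (R \<union> X) = r1" "card (R \<union> Y) = r2"
    using XY(3,4) assms(4,5) by (simp_all add: card_Un_disjoint)
  moreover have "(R \<union> X) \<union> (R \<union> Y) = D" "(R \<union> X) \<inter> (R \<union> Y) = R"
    using XY(1,2) assms(2) by auto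
  ultimately show ?thesis
    using that by blast
qed

text \<open>Distributing \<open>n\<^sub>1 + n\<^sub>2\<close> items as evenly as possible over \<open>d\<close> colours, where the
  colours in \<open>R\<close> receive one extra item, can be realised by distributing \<open>n\<^sub>1\<close> and
  \<open>n\<^sub>2\<close> evenly: without a carry from the remainders, \<open>R\<close> is partitioned; with a carry,
  the two sets of colours receiving an extra item cover all colours and meet in \<open>R\<close>.\<close>

lemma split_remainder_set:
  fixes n1 n2 d :: nat
  assumes "0 < d" "R \<subseteq> {1..d}" "card R = (n1 + n2) mod d"
  obtains R1 R2 where "R1 \<subseteq> {1..d}" "R2 \<subseteq> {1..d}" "card R1 = n1 mod d" "card R2 = n2 mod d"
    "\<And>i. i \<in> {1..d} \<Longrightarrow>
       n1 div d + of_bool (i \<in> R1) + (n2 div d + of_bool (i \<in> R2)) = (n1 + n2) div d + of_bool (i \<in> R)"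
proof (cases "n1 mod d + n2 mod d < d")
  case True
  then have q: "(n1 + n2) div d = n1 div d + n2 div d"
    and r: "(n1 + n2) mod d = n1 mod d + n2 mod d"
    by (simp_all add: div_add1_eq[of n1 n2 d] flip: mod_add_eq[of n1 d n2])
  have "finite R" "card R = n1 mod d + n2 mod d"
    using finite_subset[OF assms(2)] assms(3) r by simp_all
  then obtain R1 R2 where R12: "R1 \<union> R2 = R" "R1 \<inter> R2 = {}"
    and card: "card R1 = n1 mod d" "card R2 = n2 mod d"
    by (rule obtain_partition_with_cards)
  show ?thesis
  proof (rule that[OF _ _ card])
    have "i \<in> R \<longleftrightarrow> i \<in> R1 \<or> i \<in> R2" "\<not> (i \<in> R1 \<and> i \<in> R2)" for i
      using R12 by blast+
    then show "n1 div d + of_bool (i \<in> R1) + (n2 div d + of_bool (i \<in> R2)) =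
      (n1 + n2) div d + of_bool (i \<in> R)" for i
      using q by auto
  qed (use R12 assms(2) in auto)
next
  case False
  have small: "n1 mod d < d" "n2 mod d < d"
    using assms(1) by simp_all
  then have "n1 mod d + n2 mod d - d < d"
    by linarith
  then have "(n1 mod d + n2 mod d) div d = 1"
    using False by (simp add: le_div_geq)
  then have q: "(n1 + n2) div d = Suc (n1 div d + n2 div d)"
    by (simp add: div_add1_eq[of n1 n2 d])
  have cR: "card R = n1 mod d + n2 mod d - d"
    using assms(3) small False by (simp add: le_mod_geq flip: mod_add_eq[of n1 d n2])
  then have "card R + card {1..d} = n1 mod d + n2 mod d"
    using False by simp
  moreover have "card R \<le> n1 mod d" "card R \<le> n2 mod d"
    using cR small by linarith+
  ultimately obtain R1 R2 where R12: "R1 \<union> R2 = {1..d}" "R1 \<inter> R2 = R"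
    and card: "card R1 = n1 mod d" "card R2 = n2 mod d"
    by (rule obtain_cover_with_intersection[OF finite_atLeastAtMost assms(2)])
  show ?thesis
  proof (rule that[OF _ _ card])
    fix i
    assume "i \<in> {1..d}"
    then have "i \<in> R1 \<or> i \<in> R2" "i \<in> R \<longleftrightarrow> i \<in> R1 \<and> i \<in> R2"
      using R12 by blast+
    then show "n1 div d + of_bool (i \<in> R1) + (n2 div d + of_bool (i \<in> R2)) =
      (n1 + n2) div d + of_bool (i \<in> R)"
      using q by auto
  qed (use R12 in auto)
qed

lemma obtain_covering_subsets:
  assumes "finite B1" "finite B2" "M \<subseteq> B1" "M \<subseteq> B2"
    and "n1 \<le> card B1" "n2 \<le> card B2" "card M \<le> n1 + n2"
  obtains S1 S2 where "S1 \<subseteq> B1" "S2 \<subseteq> B2" "card S1 = n1" "card S2 = n2" "M \<subseteq> S1 \<union> S2"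
proof (cases "card M \<le> n1")
  case True
  obtain S1 where "M \<subseteq> S1" "S1 \<subseteq> B1" "card S1 = n1"
    using obtain_subset_between[OF assms(3,1) True assms(5)] .
  moreover obtain S2 where "S2 \<subseteq> B2" "card S2 = n2"
    using obtain_subset_with_card_n[OF assms(6)] by blast
  ultimately show ?thesis
    using that by blast
next
  case False
  obtain S1 where S1: "S1 \<subseteq> M" "card S1 = n1" "finite S1"
    using obtain_subset_with_card_n[of n1 M] False by auto
  then have "card (M - S1) \<le> n2"
    using assms(7) by (simp add: card_Diff_subset)
  moreover have "M - S1 \<subseteq> B2"
    using assms(4) by blast
  ultimately obtain S2 where "M - S1 \<subseteq> S2" "S2 \<subseteq> B2" "card S2 = n2"
    using obtain_subset_between[OF _ assms(2) _ assms(6)] by blast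
  then show ?thesis
    using that[of S1 S2] S1(1,2) assms(3) by blast
qed

lemma obtain_subset_inside_or_containing:
  assumes "finite D" "W \<subseteq> D" "r \<le> card D"
  obtains R where "R \<subseteq> D" "card R = r" "R \<subseteq> W \<or> W \<subseteq> R"
proof (cases "r \<le> card W")
  case True
  then obtain R where "R \<subseteq> W" "card R = r"
    by (rule obtain_subset_with_card_n)
  then show ?thesis
    using that assms(2) by blast
next
  case False
  then have "card W \<le> r"
    by simp
  then obtain R where "W \<subseteq> R" "R \<subseteq> D" "card R = r"
    by (rule obtain_subset_between[OF assms(2,1) _ assms(3)])
  then show ?thesis
    using that by blast
qed

lemma obtain_colouring_by_card:
  assumes "finite X" "S \<subseteq> {1..d}" "card S = card X"
  obtains col where "colouring d col X" "\<And>i. col i \<subseteq> X"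
    "\<And>i. i \<in> {1..d} \<Longrightarrow> card (col i) = of_bool (i \<in> S)"
proof -
  have "finite S"
    using finite_subset[OF assms(2)] by simp
  then obtain g where g: "bij_betw g X S"
    using finite_same_card_bij[OF assms(1)] assms(3) by metis
  define col where "col i = {x \<in> X. g x = i}" for i
  have "g ` X = S"
    using g by (simp add: bij_betw_def)
  then have "colouring d col X"
    using assms(2) by (auto simp: colouring_def col_def)
  moreover have "card (col i) = of_bool (i \<in> S)" for i
  proof (cases "i \<in> S")
    case True
    then obtain x where x: "x \<in> X" "g x = i"
      using \<open>g ` X = S\<close> by blast
    then have "col i = {x}"
      using g by (auto simp: col_def bij_betw_def inj_on_def)
    then show ?thesis
      using True by simp
  next
    case False
    then have "col i = {}"
      using \<open>g ` X = S\<close> by (auto simp: col_def)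
    then show ?thesis
      using False by simp
  qed
  ultimately show ?thesis
    using that by (auto simp: col_def)
qed

lemma colouring_Un:
  assumes "colouring d col X" "colouring d col' Y" "X \<inter> Y = {}"
  shows "colouring d (\<lambda>i. col i \<union> col' i) (X \<union> Y)"
  unfolding colouring_def
proof (intro conjI ballI impI)
  show "(\<Union>i\<in>{1..d}. col i \<union> col' i) = X \<union> Y"
    using assms(1,2) by (simp add: colouring_def UN_Un_distrib)
next
  fix i i'
  assume ii': "i \<in> {1..d}" "i' \<in> {1..d}" "i \<noteq> i'"
  then have "col i \<inter> col i' = {}" "col' i \<inter> col' i' = {}"
    using assms(1,2) by (simp_all add: colouring_def)
  moreover have "col i \<union> col i' \<subseteq> X" "col' i \<union> col' i' \<subseteq> Y"
    using assms(1,2) ii'(1,2) unfolding colouring_def by blast+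
  ultimately show "(col i \<union> col' i) \<inter> (col i' \<union> col' i') = {}"
    using assms(3) by blast
qed

section \<open>Homogeneity at a single interval\<close>

definition homogeneous_at :: "real \<Rightarrow> nat \<Rightarrow> dyad set \<Rightarrow> (nat \<Rightarrow> dyad set) \<Rightarrow> dyad \<Rightarrow> bool" where
  "homogeneous_at \<eta> d A col L \<longleftrightarrow>
     (d < cnt A L \<and> balanced \<eta> d (\<lambda>i. cnt (col i) L)) \<or>
     (cnt A L \<le> d \<and> (\<forall>i\<in>{1..d}. cnt (col i) L \<le> 1))"

lemma homogeneous_colouring_iff:
  assumes "0 < \<eta>" "1 \<le> d"
  shows "homogeneous_colouring \<eta> d j col A \<longleftrightarrow>
    A \<subseteq> dyadic_level j \<and> colouring d col A \<and>
    (\<forall>L\<in>dyadic. fst L \<le> j \<longrightarrow> homogeneous_at \<eta> d A col L)"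
  using balanced_iff_Max_Min[OF assms] by (simp add: homogeneous_colouring_def homogeneous_at_def)

lemma homogeneous_at_cong:
  assumes "\<And>i. i \<in> {1..d} \<Longrightarrow> restr (col i) L = restr (col' i) L"
  shows "homogeneous_at \<eta> d A col L \<longleftrightarrow> homogeneous_at \<eta> d A col' L"
  using assms balanced_cong[of d "\<lambda>i. cnt (col i) L" "\<lambda>i. cnt (col' i) L"]
  by (simp add: homogeneous_at_def)

lemma cnt_colouring:
  assumes "colouring d col X" "X \<subseteq> dyadic_level j"
  shows "cnt X L = (\<Sum>i\<in>{1..d}. cnt (col i) L)"
proof -
  have X: "X = (\<Union>i\<in>{1..d}. col i)"
    using assms(1) by (simp add: colouring_def)
  then have "restr X L = (\<Union>i\<in>{1..d}. restr (col i) L)"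
    by (auto simp: restr_def)
  moreover have "finite (restr (col i) L)" if "i \<in> {1..d}" for i
  proof (rule finite_subset[OF _ finite_restr[OF assms(2)]])
    show "restr (col i) L \<subseteq> restr X L"
      using X that by (auto simp: restr_def)
  qed
  moreover have "restr (col i) L \<inter> restr (col i') L = {}"
    if "i \<in> {1..d}" "i' \<in> {1..d}" "i \<noteq> i'" for i i'
  proof -
    have "col i \<inter> col i' = {}"
      using assms(1) that by (simp add: colouring_def)
    then show ?thesis
      by (auto simp: restr_def)
  qed
  ultimately show ?thesis
    using card_UN_disjoint[of "{1..d}" "\<lambda>i. restr (col i) L"] by simp
qed

section \<open>Extending the colouring below a dyadic interval\<close>

locale previsible_extension =
  fixes d j :: nat and \<eta> :: real and C U :: "dyad set" and Ccol :: "nat \<Rightarrow> dyad set"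
  assumes d_pos: "1 \<le> d" and eta_pos: "0 < \<eta>" and eta_half: "\<eta> \<le> 1/2"
    and C_level: "C \<subseteq> dyadic_level j"
    and C_homogeneous: "homogeneous_colouring \<eta> d j Ccol C"
    and U_level: "U \<subseteq> dyadic_level j" and U_C_disjoint: "U \<inter> C = {}"
    and previsible: "previsible d j C U"
begin

definition Hcol :: "(nat \<Rightarrow> dyad set) \<Rightarrow> nat \<Rightarrow> dyad set" where
  "Hcol Ucol i = Ccol i \<union> Ucol i"

text \<open>The invariant of the bottom-up construction.\<close>

definition extends_at :: "(nat \<Rightarrow> dyad set) \<Rightarrow> dyad \<Rightarrow> bool" where
  "extends_at Ucol L \<longleftrightarrow> colouring d Ucol (restr U L) \<and>
     (\<forall>L0. dsub L0 L \<longrightarrow> fst L0 \<le> j \<longrightarrow> homogeneous_at \<eta> d (C \<union> U) (Hcol Ucol) L0)"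

definition C_colours :: "dyad \<Rightarrow> nat set" where
  "C_colours L = {i \<in> {1..d}. restr (Ccol i) L \<noteq> {}}"

lemma Ccol_colouring: "colouring d Ccol C"
  using C_homogeneous by (simp add: homogeneous_colouring_def)

lemma Ccol_subset: "i \<in> {1..d} \<Longrightarrow> Ccol i \<subseteq> C"
  using Ccol_colouring by (auto simp: colouring_def)

lemma Ccol_level: "i \<in> {1..d} \<Longrightarrow> Ccol i \<subseteq> dyadic_level j"
  using Ccol_subset C_level by (rule subset_trans)

lemma C_homogeneous_at: "L \<in> dyadic \<Longrightarrow> fst L \<le> j \<Longrightarrow> homogeneous_at \<eta> d C Ccol L"
  using C_homogeneous homogeneous_colouring_iff[OF eta_pos d_pos] by blast

lemma C_Un_U_level: "C \<union> U \<subseteq> dyadic_level j"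
  using C_level U_level by blast

lemma cnt_C_Un_U: "cnt (C \<union> U) L = cnt C L + cnt U L"
proof -
  have "restr C L \<inter> restr U L = {}"
    using U_C_disjoint by (auto simp: restr_def)
  then show ?thesis
    using finite_restr[OF C_level] finite_restr[OF U_level] by (simp add: restr_Un card_Un_disjoint)
qed

lemma extends_at_subset: "extends_at Ucol L \<Longrightarrow> i \<in> {1..d} \<Longrightarrow> Ucol i \<subseteq> restr U L"
  by (auto simp: extends_at_def colouring_def)

lemma cnt_Hcol:
  assumes "i \<in> {1..d}" "Ucol i \<subseteq> U"
  shows "cnt (Hcol Ucol i) L = cnt (Ccol i) L + cnt (Ucol i) L"
proof -
  have "restr (Ccol i) L \<inter> restr (Ucol i) L = {}"
    using assms Ccol_subset U_C_disjoint by (auto simp: restr_def)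
  moreover have "Ccol i \<subseteq> dyadic_level j" "Ucol i \<subseteq> dyadic_level j"
    using assms Ccol_subset C_level U_level by blast+
  ultimately show ?thesis
    using finite_restr by (simp add: Hcol_def restr_Un card_Un_disjoint)
qed

lemma cnt_Ccol_small:
  assumes "L \<in> dyadic" "fst L \<le> j" "cnt C L \<le> d" "i \<in> {1..d}"
  shows "cnt (Ccol i) L = of_bool (i \<in> C_colours L)"
proof -
  have "cnt (Ccol i) L \<le> 1"
    using C_homogeneous_at[OF assms(1,2)] assms(3,4) by (auto simp: homogeneous_at_def)
  moreover have "finite (restr (Ccol i) L)"
    using finite_restr Ccol_subset[OF assms(4)] C_level by blast
  ultimately show ?thesis
    using assms(4) card_gt_0_iff[of "restr (Ccol i) L"] by (auto simp: C_colours_def)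
qed

lemma card_C_colours:
  assumes "L \<in> dyadic" "fst L \<le> j" "cnt C L \<le> d"
  shows "card (C_colours L) = cnt C L"
proof -
  have "cnt C L = (\<Sum>i\<in>{1..d}. cnt (Ccol i) L)"
    using cnt_colouring[OF Ccol_colouring C_level] .
  also have "\<dots> = (\<Sum>i\<in>{1..d}. of_bool (i \<in> C_colours L))"
    using cnt_Ccol_small[OF assms] by simp
  also have "\<dots> = card (C_colours L)"
    by (simp add: C_colours_def Int_def)
  finally show ?thesis ..
qed

lemma cnt_Ccol_pos:
  assumes "L \<in> dyadic" "fst L \<le> j" "d < cnt C L" "i \<in> {1..d}"
  shows "1 \<le> cnt (Ccol i) L"
proof (rule ccontr)
  assume "\<not> 1 \<le> cnt (Ccol i) L"
  moreover have "balanced \<eta> d (\<lambda>i. cnt (Ccol i) L)"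
    using C_homogeneous_at[OF assms(1,2)] assms(3) by (auto simp: homogeneous_at_def)
  ultimately have "\<eta> * real (cnt (Ccol k) L) \<le> 0" if "k \<in> {1..d}" for k
    using that assms(4) unfolding balanced_def by force
  then have "cnt (Ccol k) L = 0" if "k \<in> {1..d}" for k
    using that eta_pos by (simp add: mult_le_0_iff)
  then show False
    using cnt_colouring[OF Ccol_colouring C_level, of L] assms(3) by simp
qed

lemma C_colours_subset: "C_colours L \<subseteq> {1..d}"
  by (auto simp: C_colours_def)

lemma finite_C_colours: "finite (C_colours L)"
  by (simp add: C_colours_def)

lemma C_colours_empty: "restr C L = {} \<Longrightarrow> C_colours L = {}"
  using Ccol_subset by (auto simp: C_colours_def restr_def)

lemma card_free_colours:
  assumes "L \<in> dyadic" "fst L \<le> j" "cnt C L \<le> d"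
  shows "card ({1..d} - C_colours L) = d - cnt C L"
  using card_Diff_subset[OF finite_C_colours C_colours_subset] card_C_colours[OF assms] by simp

lemma obtain_free_colours:
  assumes "L \<in> dyadic" "fst L \<le> j" "cnt (C \<union> U) L \<le> d"
  obtains S where "S \<subseteq> {1..d} - C_colours L" "card S = cnt U L"
proof -
  have "card ({1..d} - C_colours L) = d - cnt C L"
    using card_free_colours[OF assms(1,2)] assms(3) cnt_C_Un_U by simp
  then have "cnt U L \<le> card ({1..d} - C_colours L)"
    using assms(3) cnt_C_Un_U by simp
  then show ?thesis
    using obtain_subset_with_card_n that by metis
qed

lemma extends_at_small:
  assumes "L \<in> dyadic" "fst L \<le> j" "cnt (C \<union> U) L \<le> d"
    and S: "S \<subseteq> {1..d} - C_colours L" "card S = cnt U L"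
  obtains Ucol where "extends_at Ucol L"
    "\<And>i. i \<in> {1..d} \<Longrightarrow> cnt (Hcol Ucol i) L = of_bool (i \<in> C_colours L) + of_bool (i \<in> S)"
proof -
  obtain Ucol where Ucol: "colouring d Ucol (restr U L)" "\<And>i. Ucol i \<subseteq> restr U L"
    "\<And>i. i \<in> {1..d} \<Longrightarrow> card (Ucol i) = of_bool (i \<in> S)"
    using obtain_colouring_by_card[OF finite_restr[OF U_level] _ S(2)] S(1) by blast
  have "restr (Ucol i) L = Ucol i" for i
    using Ucol(2) by (auto simp: restr_def)
  moreover have "Ucol i \<subseteq> U" for i
    using Ucol(2) by (auto simp: restr_def)
  moreover have "cnt C L \<le> d"
    using assms(3) cnt_C_Un_U by simp
  ultimately have cnt_L: "cnt (Hcol Ucol i) L = of_bool (i \<in> C_colours L) + of_bool (i \<in> S)"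
    if "i \<in> {1..d}" for i
    using that cnt_Hcol cnt_Ccol_small[OF assms(1,2)] Ucol(3) by simp
  have "homogeneous_at \<eta> d (C \<union> U) (Hcol Ucol) L0" if "dsub L0 L" for L0
  proof -
    have "cnt (C \<union> U) L0 \<le> d"
      using assms(3) cnt_mono[OF C_Un_U_level that] by simp
    moreover have "cnt (Hcol Ucol i) L0 \<le> 1" if "i \<in> {1..d}" for i
    proof -
      have "Hcol Ucol i \<subseteq> dyadic_level j"
        using that Ccol_subset C_level \<open>Ucol i \<subseteq> U\<close> U_level by (auto simp: Hcol_def)
      then have "cnt (Hcol Ucol i) L0 \<le> cnt (Hcol Ucol i) L"
        using cnt_mono \<open>dsub L0 L\<close> by blast
      moreover have "of_bool (i \<in> C_colours L) + of_bool (i \<in> S) \<le> (1::nat)"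
        using S(1) by auto
      ultimately show ?thesis
        using cnt_L[OF that] by linarith
    qed
    ultimately show ?thesis
      by (simp add: homogeneous_at_def)
  qed
  then show ?thesis
    using that[OF _ cnt_L] Ucol(1) by (simp add: extends_at_def)
qed

lemma restr_Hcol_join:
  assumes "children L P Q" "extends_at U2 Q" "dsub L0 P" "i \<in> {1..d}"
  shows "restr (Hcol (\<lambda>i. U1 i \<union> U2 i) i) L0 = restr (Hcol U1 i) L0"
proof -
  have "restr (U2 i) L0 = {}"
  proof (intro equals0I)
    fix I
    assume "I \<in> restr (U2 i) L0"
    then have "dsub I P" "dsub I Q"
      using extends_at_subset[OF assms(2,4)] dsub_trans[OF _ assms(3)] by (auto simp: restr_def)
    then show False
      using not_dsub_both_children[OF assms(1)] by blast
  qed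
  then show ?thesis
    by (auto simp: Hcol_def restr_def)
qed

lemma restr_Hcol_join':
  assumes "children L P Q" "extends_at U1 P" "dsub L0 Q" "i \<in> {1..d}"
  shows "restr (Hcol (\<lambda>i. U1 i \<union> U2 i) i) L0 = restr (Hcol U2 i) L0"
proof -
  have "(\<lambda>i. U1 i \<union> U2 i) = (\<lambda>i. U2 i \<union> U1 i)"
    by auto
  then show ?thesis
    using restr_Hcol_join[OF children_sym[OF assms(1)] assms(2-4)] by simp
qed

lemma cnt_Hcol_join:
  assumes "fst L < j" "children L P Q" "extends_at U1 P" "extends_at U2 Q" "i \<in> {1..d}"
  shows "cnt (Hcol (\<lambda>i. U1 i \<union> U2 i) i) L = cnt (Hcol U1 i) P + cnt (Hcol U2 i) Q"
proof -
  have "Hcol (\<lambda>i. U1 i \<union> U2 i) i \<subseteq> dyadic_level j"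
    using extends_at_subset[OF assms(3,5)] extends_at_subset[OF assms(4,5)] Ccol_subset[OF assms(5)]
      C_level U_level by (auto simp: Hcol_def restr_def)
  then show ?thesis
    using cnt_children[OF _ assms(1,2)] restr_Hcol_join[OF assms(2,4) dsub_refl assms(5)]
      restr_Hcol_join'[OF assms(2,3) dsub_refl assms(5)] by simp
qed

lemma colouring_join:
  assumes "fst L < j" "children L P Q" "extends_at U1 P" "extends_at U2 Q"
  shows "colouring d (\<lambda>i. U1 i \<union> U2 i) (restr U L)"
  unfolding colouring_def
proof (intro conjI ballI impI)
  have "(\<Union>i\<in>{1..d}. U1 i) = restr U P" "(\<Union>i\<in>{1..d}. U2 i) = restr U Q"
    using assms(3,4) by (simp_all add: extends_at_def colouring_def)
  then show "(\<Union>i\<in>{1..d}. U1 i \<union> U2 i) = restr U L"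
    using restr_children[OF U_level assms(1,2)] by (simp add: UN_Un_distrib)
next
  fix i i'
  assume ii': "i \<in> {1..d}" "i' \<in> {1..d}" "i \<noteq> i'"
  then have "U1 i \<inter> U1 i' = {}" "U2 i \<inter> U2 i' = {}"
    using assms(3,4) by (simp_all add: extends_at_def colouring_def)
  moreover have "U1 i \<inter> U2 i' = {}" "U2 i \<inter> U1 i' = {}"
    using extends_at_subset[OF assms(3)] extends_at_subset[OF assms(4)] ii'(1,2)
      restr_children_disjoint[OF assms(2), of U] by blast+
  ultimately show "(U1 i \<union> U2 i) \<inter> (U1 i' \<union> U2 i') = {}"
    by blast
qed

lemma extends_at_join:
  assumes "fst L < j" "children L P Q" "extends_at U1 P" "extends_at U2 Q"
    and "d < cnt (C \<union> U) L" "balanced \<eta> d (\<lambda>i. cnt (Hcol U1 i) P + cnt (Hcol U2 i) Q)"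
  shows "extends_at (\<lambda>i. U1 i \<union> U2 i) L"
  unfolding extends_at_def
proof (intro conjI allI impI)
  show "colouring d (\<lambda>i. U1 i \<union> U2 i) (restr U L)"
    using colouring_join[OF assms(1-4)] .
next
  fix L0
  assume L0: "dsub L0 L" "fst L0 \<le> j"
  consider "L0 = L" | "dsub L0 P" | "dsub L0 Q"
    using dsub_cases_children[OF assms(2) L0(1)] by blast
  then show "homogeneous_at \<eta> d (C \<union> U) (Hcol (\<lambda>i. U1 i \<union> U2 i)) L0"
  proof cases
    case 1
    then show ?thesis
      using assms(5,6) cnt_Hcol_join[OF assms(1-4)]
        balanced_cong[of d "\<lambda>i. cnt (Hcol (\<lambda>i. U1 i \<union> U2 i) i) L"]
      by (simp add: homogeneous_at_def)
  next
    case 2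
    have "homogeneous_at \<eta> d (C \<union> U) (Hcol U1) L0"
      using assms(3) 2 L0(2) unfolding extends_at_def by blast
    moreover have "homogeneous_at \<eta> d (C \<union> U) (Hcol (\<lambda>i. U1 i \<union> U2 i)) L0 \<longleftrightarrow>
      homogeneous_at \<eta> d (C \<union> U) (Hcol U1) L0"
      by (rule homogeneous_at_cong) (rule restr_Hcol_join[OF assms(2,4) 2])
    ultimately show ?thesis
      by simp
  next
    case 3
    have "homogeneous_at \<eta> d (C \<union> U) (Hcol U2) L0"
      using assms(4) 3 L0(2) unfolding extends_at_def by blast
    moreover have "homogeneous_at \<eta> d (C \<union> U) (Hcol (\<lambda>i. U1 i \<union> U2 i)) L0 \<longleftrightarrow>
      homogeneous_at \<eta> d (C \<union> U) (Hcol U2) L0"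
      by (rule homogeneous_at_cong) (rule restr_Hcol_join'[OF assms(2,3) 3])
    ultimately show ?thesis
      by simp
  qed
qed

lemma extends_at_join_nearly_constant:
  assumes "fst L < j" "children L P Q" "extends_at U1 P" "extends_at U2 Q" "d < cnt (C \<union> U) L"
    and "1 \<le> a"
    and "\<And>i. i \<in> {1..d} \<Longrightarrow>
      a \<le> cnt (Hcol U1 i) P + cnt (Hcol U2 i) Q \<and> cnt (Hcol U1 i) P + cnt (Hcol U2 i) Q \<le> Suc a"
  shows "extends_at (\<lambda>i. U1 i \<union> U2 i) L"
  using assms(7) by (intro extends_at_join[OF assms(1-5)] balanced_nearly_constant[OF eta_pos eta_half assms(6)])

lemma fst_less_if_cnt_greater:
  assumes "fst L \<le> j" "d < cnt (C \<union> U) L"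
  shows "fst L < j"
proof (rule ccontr)
  assume "\<not> fst L < j"
  then have "cnt (C \<union> U) L \<le> 1"
    using assms(1) cnt_leaf_le_1[OF C_Un_U_level] by simp
  then show False
    using assms(2) d_pos by simp
qed

lemma extends_at_without_C_base:
  assumes "L \<in> dyadic" "fst L \<le> j" "restr C L = {}" "cnt U L \<le> d"
    and R: "R \<subseteq> {1..d}" "card R = cnt U L mod d"
  shows "\<exists>Ucol. extends_at Ucol L \<and>
    (\<forall>i\<in>{1..d}. cnt (Hcol Ucol i) L = cnt U L div d + of_bool (i \<in> R))"
proof -
  define S where "S = (if cnt U L = d then {1..d} else R)"
  have "cnt U L = d \<Longrightarrow> R = {}"
    using R finite_subset[OF R(1)] by auto
  then have S_R: "of_bool (i \<in> S) = cnt U L div d + of_bool (i \<in> R)" if "i \<in> {1..d}" for i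
    using that assms(4) by (auto simp: S_def)
  have "S \<subseteq> {1..d} - C_colours L" "card S = cnt U L"
    using R assms(4) C_colours_empty[OF assms(3)] by (auto simp: S_def)
  moreover have "cnt (C \<union> U) L \<le> d"
    using assms(3,4) cnt_C_Un_U by simp
  ultimately obtain Ucol where "extends_at Ucol L"
    "\<And>i. i \<in> {1..d} \<Longrightarrow> cnt (Hcol Ucol i) L = of_bool (i \<in> C_colours L) + of_bool (i \<in> S)"
    using extends_at_small[OF assms(1,2)] by metis
  then show ?thesis
    using C_colours_empty[OF assms(3)] S_R by auto
qed

lemma extends_at_without_C:
  assumes "L \<in> dyadic" "fst L \<le> j" "restr C L = {}"
    and "R \<subseteq> {1..d}" "card R = cnt U L mod d"
  shows "\<exists>Ucol. extends_at Ucol L \<and>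
    (\<forall>i\<in>{1..d}. cnt (Hcol Ucol i) L = cnt U L div d + of_bool (i \<in> R))"
  using assms
proof (induction "j - fst L" arbitrary: L R rule: less_induct)
  case less
  show ?case
  proof (cases "cnt U L \<le> d")
    case True
    then show ?thesis
      using extends_at_without_C_base less.prems by blast
  next
    case False
    then have big: "d < cnt (C \<union> U) L"
      using less.prems(3) cnt_C_Un_U by simp
    then have "fst L < j"
      using fst_less_if_cnt_greater less.prems(2) by blast
    obtain P Q where PQ: "children L P Q"
      and nodes: "P \<in> dyadic" "Q \<in> dyadic" "fst P = Suc (fst L)" "fst Q = Suc (fst L)"
      using obtain_children[OF less.prems(1)] by blast
    have no_C: "restr C P = {}" "restr C Q = {}"
      using restr_mono[OF dsub_children[OF PQ]] restr_mono[OF dsub_children[OF children_sym[OF PQ]]]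
        less.prems(3) by blast+
    have split: "cnt U L = cnt U P + cnt U Q"
      using cnt_children[OF U_level \<open>fst L < j\<close> PQ] .
    obtain R1 R2 where R12: "R1 \<subseteq> {1..d}" "R2 \<subseteq> {1..d}" "card R1 = cnt U P mod d"
        "card R2 = cnt U Q mod d"
      and sum: "\<And>i. i \<in> {1..d} \<Longrightarrow> cnt U P div d + of_bool (i \<in> R1) + (cnt U Q div d + of_bool (i \<in> R2))
          = cnt U L div d + of_bool (i \<in> R)"
      using split_remainder_set[of d R "cnt U P" "cnt U Q"] d_pos less.prems(4,5) split by auto
    have deeper: "j - fst P < j - fst L" "fst P \<le> j" "j - fst Q < j - fst L" "fst Q \<le> j"
      using nodes \<open>fst L < j\<close> by simp_all
    obtain U1 where U1: "extends_at U1 P"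
        "\<forall>i\<in>{1..d}. cnt (Hcol U1 i) P = cnt U P div d + of_bool (i \<in> R1)"
      using less.hyps[OF deeper(1) nodes(1) deeper(2) no_C(1) R12(1,3)] by blast
    obtain U2 where U2: "extends_at U2 Q"
        "\<forall>i\<in>{1..d}. cnt (Hcol U2 i) Q = cnt U Q div d + of_bool (i \<in> R2)"
      using less.hyps[OF deeper(3) nodes(2) deeper(4) no_C(2) R12(2,4)] by blast
    have counts: "cnt (Hcol U1 i) P + cnt (Hcol U2 i) Q = cnt U L div d + of_bool (i \<in> R)"
      if "i \<in> {1..d}" for i
      using that U1(2) U2(2) sum by simp
    have "1 \<le> cnt U L div d"
      using False d_pos div_greater_zero_iff[of "cnt U L" d] by simp
    then have "extends_at (\<lambda>i. U1 i \<union> U2 i) L"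
      using counts by (intro extends_at_join_nearly_constant[OF \<open>fst L < j\<close> PQ U1(1) U2(1) big]) auto
    then show ?thesis
      using cnt_Hcol_join[OF \<open>fst L < j\<close> PQ U1(1) U2(1)] counts by auto
  qed
qed

lemma extends_at_both_children_small_cover:
  assumes "L \<in> dyadic" "fst L < j" "children L P Q"
    and small: "cnt (C \<union> U) P \<le> d" "cnt (C \<union> U) Q \<le> d" and big: "d < cnt (C \<union> U) L"
    and S1: "S1 \<subseteq> {1..d} - C_colours P" "card S1 = cnt U P"
    and S2: "S2 \<subseteq> {1..d} - C_colours Q" "card S2 = cnt U Q"
    and cover: "{1..d} \<subseteq> C_colours P \<union> S1 \<union> C_colours Q \<union> S2"
  shows "\<exists>Ucol. extends_at Ucol L"
proof -
  have "P \<in> dyadic" "fst P \<le> j" "Q \<in> dyadic" "fst Q \<le> j"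
    using children_dyadic_le[OF assms(1-3)] by simp_all
  then obtain U1 U2 where U1: "extends_at U1 P"
      "\<And>i. i \<in> {1..d} \<Longrightarrow> cnt (Hcol U1 i) P = of_bool (i \<in> C_colours P) + of_bool (i \<in> S1)"
    and U2: "extends_at U2 Q"
      "\<And>i. i \<in> {1..d} \<Longrightarrow> cnt (Hcol U2 i) Q = of_bool (i \<in> C_colours Q) + of_bool (i \<in> S2)"
    using extends_at_small[OF _ _ small(1) S1] extends_at_small[OF _ _ small(2) S2] by metis
  have "1 \<le> cnt (Hcol U1 i) P + cnt (Hcol U2 i) Q \<and> cnt (Hcol U1 i) P + cnt (Hcol U2 i) Q \<le> Suc 1"
    if "i \<in> {1..d}" for i
    using that U1(2) U2(2) S1(1) S2(1) cover by auto
  then show ?thesis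
    using extends_at_join_nearly_constant[OF assms(2,3) U1(1) U2(1) big order_refl] by blast
qed

lemma cnt_Ccol_children_small:
  assumes "L \<in> dyadic" "fst L < j" "children L P Q" "cnt C P \<le> d" "cnt C Q \<le> d" "i \<in> {1..d}"
  shows "cnt (Ccol i) L = of_bool (i \<in> C_colours P) + of_bool (i \<in> C_colours Q)"
  using cnt_children[OF Ccol_level[OF assms(6)] assms(2,3)] children_dyadic_le[OF assms(1-3)]
    cnt_Ccol_small[OF _ _ assms(4,6)] cnt_Ccol_small[OF _ _ assms(5,6)] by simp

lemma C_colours_children_cover:
  assumes "L \<in> dyadic" "fst L < j" "children L P Q" "cnt C P \<le> d" "cnt C Q \<le> d" "d < cnt C L"
  shows "{1..d} \<subseteq> C_colours P \<union> C_colours Q"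
proof
  fix i
  assume i: "i \<in> {1..d}"
  then have "(1::nat) \<le> of_bool (i \<in> C_colours P) + of_bool (i \<in> C_colours Q)"
    using cnt_Ccol_pos[OF assms(1) less_imp_le[OF assms(2)] assms(6) i]
      cnt_Ccol_children_small[OF assms(1-5) i] by simp
  then show "i \<in> C_colours P \<union> C_colours Q"
    by (cases "i \<in> C_colours P"; cases "i \<in> C_colours Q") auto
qed

text \<open>As \<open>C\<close> has at most \<open>d\<close> intervals below \<open>L\<close>, each colour occurs there at most once.\<close>

lemma C_colours_children_disjoint:
  assumes "L \<in> dyadic" "fst L < j" "children L P Q" "cnt C P \<le> d" "cnt C Q \<le> d" "cnt C L \<le> d"
  shows "C_colours P \<inter> C_colours Q = {}"
proof (intro equals0I)
  fix i
  assume "i \<in> C_colours P \<inter> C_colours Q"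
  moreover from this have i: "i \<in> {1..d}"
    using C_colours_subset by blast
  ultimately have "cnt (Ccol i) L = 2"
    using cnt_Ccol_children_small[OF assms(1-5)] by simp
  then show False
    using cnt_Ccol_small[OF assms(1) less_imp_le[OF assms(2)] assms(6) i]
    by (cases "i \<in> C_colours L") simp_all
qed

lemma extends_at_both_children_small:
  assumes "L \<in> dyadic" "fst L < j" "children L P Q"
    and small: "cnt (C \<union> U) P \<le> d" "cnt (C \<union> U) Q \<le> d" and big: "d < cnt (C \<union> U) L"
  shows "\<exists>Ucol. extends_at Ucol L"
proof -
  have nodes: "P \<in> dyadic" "fst P \<le> j" "Q \<in> dyadic" "fst Q \<le> j"
    using children_dyadic_le[OF assms(1-3)] by simp_all
  have small_C: "cnt C P \<le> d" "cnt C Q \<le> d"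
    using small cnt_C_Un_U by simp_all
  show ?thesis
  proof (cases "d < cnt C L")
    case True
    obtain S1 S2 where S1: "S1 \<subseteq> {1..d} - C_colours P" "card S1 = cnt U P"
      and S2: "S2 \<subseteq> {1..d} - C_colours Q" "card S2 = cnt U Q"
      using obtain_free_colours[OF nodes(1,2) small(1)] obtain_free_colours[OF nodes(3,4) small(2)]
      by metis
    then show ?thesis
      using C_colours_children_cover[OF assms(1-3) small_C True]
      by (intro extends_at_both_children_small_cover[OF assms S1 S2]) blast
  next
    case False
    then have "card (C_colours P \<union> C_colours Q) = cnt C L"
      using card_Un_disjoint[OF finite_C_colours finite_C_colours]
        C_colours_children_disjoint[OF assms(1-3) small_C] card_C_colours[OF nodes(1,2) small_C(1)]
        card_C_colours[OF nodes(3,4) small_C(2)] cnt_children[OF C_level assms(2,3)] by simp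
    then have M: "card ({1..d} - (C_colours P \<union> C_colours Q)) \<le> cnt U P + cnt U Q"
      using card_Diff_subset[of "C_colours P \<union> C_colours Q" "{1..d}"] finite_C_colours C_colours_subset
        big False cnt_C_Un_U[of L] cnt_children[OF U_level assms(2,3)] by auto
    have n12: "cnt U P \<le> card ({1..d} - C_colours P)" "cnt U Q \<le> card ({1..d} - C_colours Q)"
      using card_free_colours[OF nodes(1,2) small_C(1)] card_free_colours[OF nodes(3,4) small_C(2)]
        small cnt_C_Un_U by simp_all
    obtain S1 S2 where S1: "S1 \<subseteq> {1..d} - C_colours P" and S2: "S2 \<subseteq> {1..d} - C_colours Q"
      and card: "card S1 = cnt U P" "card S2 = cnt U Q"
      and cover: "{1..d} - (C_colours P \<union> C_colours Q) \<subseteq> S1 \<union> S2"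
      by (rule obtain_covering_subsets[OF _ _ _ _ n12 M]) auto
    show ?thesis
      using cover by (intro extends_at_both_children_small_cover[OF assms S1 card(1) S2 card(2)]) blast
  qed
qed

lemma balanced_if_extends_at:
  assumes "extends_at Ucol L" "fst L \<le> j" "d < cnt (C \<union> U) L"
  shows "balanced \<eta> d (\<lambda>i. cnt (Hcol Ucol i) L)"
  using assms dsub_refl unfolding extends_at_def homogeneous_at_def by fastforce

lemma extends_at_one_child_full:
  assumes "L \<in> dyadic" "fst L < j" "children L P Q"
    and full: "cnt (C \<union> U) P = d" and big: "d < cnt (C \<union> U) Q" and U2: "extends_at U2 Q"
  shows "\<exists>Ucol. extends_at Ucol L"
proof -
  have P: "P \<in> dyadic" "fst P \<le> j" and "fst Q \<le> j"
    using children_dyadic_le[OF assms(1-3)] by simp_all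
  obtain S where S: "S \<subseteq> {1..d} - C_colours P" "card S = cnt U P"
    using obtain_free_colours[OF P] full by auto
  then obtain U1 where U1: "extends_at U1 P"
    "\<And>i. i \<in> {1..d} \<Longrightarrow> cnt (Hcol U1 i) P = of_bool (i \<in> C_colours P) + of_bool (i \<in> S)"
    using extends_at_small[OF P] full by (metis order_refl)
  have "C_colours P \<inter> S = {}"
    using S(1) by blast
  then have "card (C_colours P \<union> S) = card (C_colours P) + card S"
    using card_Un_disjoint[OF finite_C_colours[of P] finite_subset[OF S(1)]] by simp
  also have "\<dots> = cnt (C \<union> U) P"
    using S(2) card_C_colours[OF P] full cnt_C_Un_U[of P] by simp
  finally have "card (C_colours P \<union> S) = d"
    using full by simp
  then have "C_colours P \<union> S = {1..d}"
    using card_subset_eq[of "{1..d}" "C_colours P \<union> S"] S(1) C_colours_subset by auto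
  then have "cnt (Hcol U1 i) P = 1" if "i \<in> {1..d}" for i
    using that U1(2) S(1) by auto
  then have "balanced \<eta> d (\<lambda>i. cnt (Hcol U1 i) P + cnt (Hcol U2 i) Q)"
    using balanced_Suc[OF _ balanced_if_extends_at[OF U2 \<open>fst Q \<le> j\<close> big]] eta_half
      balanced_cong[of d "\<lambda>i. cnt (Hcol U1 i) P + cnt (Hcol U2 i) Q" "\<lambda>i. Suc (cnt (Hcol U2 i) Q)"]
    by simp
  moreover have "d < cnt (C \<union> U) L"
    using big cnt_children[OF C_Un_U_level assms(2,3)] by simp
  ultimately show ?thesis
    using extends_at_join[OF assms(2,3) U1(1) U2] by blast
qed

lemma extends_at_one_child_small_no_U:
  assumes "L \<in> dyadic" "fst L < j" "children L P Q"
    and small: "cnt (C \<union> U) P \<le> d" and big: "d < cnt (C \<union> U) Q"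
    and no_U: "restr U Q = {}" and U2: "extends_at U2 Q"
  shows "\<exists>Ucol. extends_at Ucol L"
proof -
  have P: "P \<in> dyadic" "fst P \<le> j" and Q: "Q \<in> dyadic" "fst Q \<le> j"
    using children_dyadic_le[OF assms(1-3)] by simp_all
  have small_C: "cnt C P \<le> d"
    using small cnt_C_Un_U by simp
  have big_C: "d < cnt C Q" "d < cnt C L"
    using big no_U cnt_C_Un_U[of Q] cnt_children[OF C_level assms(2,3)] by simp_all
  define x v where "x i = cnt (Ccol i) L" and "v i = cnt (Ccol i) Q" for i
  have x: "x i = v i + of_bool (i \<in> C_colours P)" if "i \<in> {1..d}" for i
    using that cnt_children[OF Ccol_level assms(2,3)] cnt_Ccol_small[OF P small_C] by (simp add: x_def v_def)
  have U2_v: "cnt (Hcol U2 i) Q = v i" if "i \<in> {1..d}" for i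
  proof -
    have "U2 i = {}"
      using extends_at_subset[OF U2 that] no_U by blast
    then show ?thesis
      using cnt_Hcol[OF that] by (simp add: v_def)
  qed
  have "cnt U P \<le> card ({1..d} - C_colours P)"
    using card_free_colours[OF P small_C] small cnt_C_Un_U by simp
  then obtain S where S: "S \<subseteq> {1..d} - C_colours P" "card S = cnt U P"
    and smallest: "\<forall>s\<in>S. \<forall>t\<in>{1..d} - C_colours P - S. x s \<le> x t"
    using obtain_subset_of_smallest[of "{1..d} - C_colours P" "cnt U P" x] by auto
  obtain U1 where U1: "extends_at U1 P"
    "\<And>i. i \<in> {1..d} \<Longrightarrow> cnt (Hcol U1 i) P = of_bool (i \<in> C_colours P) + of_bool (i \<in> S)"
    using extends_at_small[OF P small S] by blast
  have "balanced \<eta> d (\<lambda>i. x i + of_bool (i \<in> S))"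
  proof (rule balanced_add_smallest[OF eta_pos eta_half _ _ x _ S(1) smallest])
    show "balanced \<eta> d x" "balanced \<eta> d v"
      using C_homogeneous_at[OF assms(1) less_imp_le[OF assms(2)]] C_homogeneous_at[OF Q] big_C
      by (simp_all add: homogeneous_at_def x_def[abs_def] v_def[abs_def])
    show "1 \<le> x i" if "i \<in> {1..d}" for i
      using cnt_Ccol_pos[OF assms(1) less_imp_le[OF assms(2)] big_C(2) that] by (simp add: x_def)
  qed
  then have "balanced \<eta> d (\<lambda>i. cnt (Hcol U1 i) P + cnt (Hcol U2 i) Q)"
    using balanced_cong[of d "\<lambda>i. cnt (Hcol U1 i) P + cnt (Hcol U2 i) Q" "\<lambda>i. x i + of_bool (i \<in> S)"]
      U1(2) U2_v x by simp
  moreover have "d < cnt (C \<union> U) L"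
    using big_C(2) cnt_C_Un_U[of L] by simp
  ultimately show ?thesis
    using extends_at_join[OF assms(2,3) U1(1) U2] by blast
qed

text \<open>The colours receiving an extra interval below \<open>Q\<close> either avoid all colours used below
  \<open>P\<close> or contain all colours unused there; either way the joint counts differ by at most one.\<close>

lemma extends_at_one_child_small_no_C:
  assumes "L \<in> dyadic" "fst L < j" "children L P Q"
    and small: "cnt (C \<union> U) P \<le> d" and big: "d < cnt (C \<union> U) Q" and no_C: "restr C Q = {}"
  shows "\<exists>Ucol. extends_at Ucol L"
proof -
  have P: "P \<in> dyadic" "fst P \<le> j" and Q: "Q \<in> dyadic" "fst Q \<le> j"
    using children_dyadic_le[OF assms(1-3)] by simp_all
  obtain S where S: "S \<subseteq> {1..d} - C_colours P" "card S = cnt U P"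
    using obtain_free_colours[OF P small] by blast
  obtain U1 where U1: "extends_at U1 P"
    "\<And>i. i \<in> {1..d} \<Longrightarrow> cnt (Hcol U1 i) P = of_bool (i \<in> C_colours P) + of_bool (i \<in> S)"
    using extends_at_small[OF P small S] by blast
  define q where "q = cnt U Q div d"
  have "1 \<le> q"
    using big no_C cnt_C_Un_U[of Q] d_pos div_greater_zero_iff[of "cnt U Q" d] by (simp add: q_def)
  have "cnt U Q mod d \<le> card {1..d}"
    using d_pos by simp
  then obtain R where R: "R \<subseteq> {1..d}" "card R = cnt U Q mod d"
    and R_W: "R \<subseteq> {1..d} - (C_colours P \<union> S) \<or> {1..d} - (C_colours P \<union> S) \<subseteq> R"
    using obtain_subset_inside_or_containing[of "{1..d}" "{1..d} - (C_colours P \<union> S)"] by auto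
  obtain U2 where U2: "extends_at U2 Q" "\<forall>i\<in>{1..d}. cnt (Hcol U2 i) Q = q + of_bool (i \<in> R)"
    using extends_at_without_C[OF Q no_C R] by (auto simp: q_def)
  define a where "a = (if R \<subseteq> {1..d} - (C_colours P \<union> S) then q else Suc q)"
  have "a \<le> cnt (Hcol U1 i) P + cnt (Hcol U2 i) Q \<and> cnt (Hcol U1 i) P + cnt (Hcol U2 i) Q \<le> Suc a"
    if "i \<in> {1..d}" for i
    using that U1(2) U2(2) S(1) R_W by (auto simp: a_def)
  moreover have "1 \<le> a"
    using \<open>1 \<le> q\<close> by (simp add: a_def)
  moreover have "d < cnt (C \<union> U) L"
    using big cnt_children[OF C_Un_U_level assms(2,3)] by simp
  ultimately show ?thesis
    using extends_at_join_nearly_constant[OF assms(2,3) U1(1) U2(1)] by blast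
qed

lemma extends_at_one_child_small:
  assumes "L \<in> dyadic" "fst L < j" "children L P Q"
    and small: "cnt (C \<union> U) P \<le> d" and big: "d < cnt (C \<union> U) Q" and U2: "extends_at U2 Q"
  shows "\<exists>Ucol. extends_at Ucol L"
proof (cases "cnt (C \<union> U) P = d")
  case True
  then show ?thesis
    using extends_at_one_child_full[OF assms(1-3) _ big U2] by blast
next
  case False
  then have "restr U Q = {} \<or> restr C Q = {}"
    using previsibleD[OF previsible assms(1-3)] small big by simp
  then show ?thesis
    using extends_at_one_child_small_no_U[OF assms(1-3) small big _ U2]
      extends_at_one_child_small_no_C[OF assms(1-3) small big] by blast
qed

lemma extends_at_parent:
  assumes "L \<in> dyadic" "fst L < j" "children L P Q" "extends_at U1 P" "extends_at U2 Q"
    and big: "d < cnt (C \<union> U) L"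
  shows "\<exists>Ucol. extends_at Ucol L"
proof -
  have "fst P \<le> j" "fst Q \<le> j"
    using children_dyadic_le[OF assms(1-3)] by simp_all
  consider "d < cnt (C \<union> U) P" "d < cnt (C \<union> U) Q"
    | "cnt (C \<union> U) P \<le> d" "cnt (C \<union> U) Q \<le> d"
    | "cnt (C \<union> U) P \<le> d" "d < cnt (C \<union> U) Q"
    | "d < cnt (C \<union> U) P" "cnt (C \<union> U) Q \<le> d"
    by linarith
  then show ?thesis
  proof cases
    case 1
    then show ?thesis
      using extends_at_join[OF assms(2-5) big] balanced_add
        balanced_if_extends_at[OF assms(4) \<open>fst P \<le> j\<close>] balanced_if_extends_at[OF assms(5) \<open>fst Q \<le> j\<close>]
      by blast
  next
    case 2
    then show ?thesis
      using extends_at_both_children_small[OF assms(1-3) _ _ big] by blast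
  next
    case 3
    then show ?thesis
      using extends_at_one_child_small[OF assms(1-3) _ _ assms(5)] by blast
  next
    case 4
    then show ?thesis
      using extends_at_one_child_small[OF assms(1,2) children_sym[OF assms(3)] _ _ assms(4)] by blast
  qed
qed

lemma exists_extends_at:
  assumes "L \<in> dyadic" "fst L \<le> j"
  shows "\<exists>Ucol. extends_at Ucol L"
  using assms
proof (induction "j - fst L" arbitrary: L rule: less_induct)
  case less
  show ?case
  proof (cases "cnt (C \<union> U) L \<le> d")
    case True
    then show ?thesis
      using obtain_free_colours[OF less.prems True] extends_at_small[OF less.prems True] by metis
  next
    case False
    then have big: "d < cnt (C \<union> U) L" and "fst L < j"
      using fst_less_if_cnt_greater less.prems(2) by simp_all
    obtain P Q where PQ: "children L P Q"
      and "P \<in> dyadic" "Q \<in> dyadic" "fst P = Suc (fst L)" "fst Q = Suc (fst L)"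
      using obtain_children[OF less.prems(1)] by blast
    then obtain U1 U2 where "extends_at U1 P" "extends_at U2 Q"
      using less.hyps \<open>fst L < j\<close> by (metis Suc_leI diff_less_mono2 lessI)
    then show ?thesis
      using extends_at_parent[OF less.prems(1) \<open>fst L < j\<close> PQ _ _ big] by blast
  qed
qed

lemma homogeneous_extension:
  "\<exists>Ucol. colouring d Ucol U \<and> homogeneous_colouring \<eta> d j (\<lambda>i. Ccol i \<union> Ucol i) (C \<union> U)"
proof -
  obtain Ucol where Ucol: "extends_at Ucol (0, 0)"
    using exists_extends_at[of "(0, 0)"] by (auto simp: dyadic_def)
  then have col: "colouring d Ucol U"
    using restr_root[OF U_level] by (simp add: extends_at_def)
  have "homogeneous_at \<eta> d (C \<union> U) (Hcol Ucol) L" if "L \<in> dyadic" "fst L \<le> j" for L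
    using Ucol that dsub_root unfolding extends_at_def dyadic_def by auto
  moreover have "colouring d (\<lambda>i. Ccol i \<union> Ucol i) (C \<union> U)"
    using colouring_Un[OF Ccol_colouring col] U_C_disjoint by blast
  ultimately have "homogeneous_colouring \<eta> d j (\<lambda>i. Ccol i \<union> Ucol i) (C \<union> U)"
    using homogeneous_colouring_iff[OF eta_pos d_pos] C_Un_U_level by (simp add: Hcol_def[abs_def])
  then show ?thesis
    using col by blast
qed

end

theorem theorem2p1:
  fixes d j :: nat and \<eta> :: real and C U :: "dyad set" and Ccol :: "nat \<Rightarrow> dyad set"
  assumes "d \<ge> 1" and "0 < \<eta>" and "\<eta> \<le> 1/2"
    and "C \<subseteq> dyadic_level j"
    and "homogeneous_colouring \<eta> d j Ccol C"
    and "U \<subseteq> dyadic_level j" and "U \<inter> C = {}"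
    and "previsible d j C U"
  shows "\<exists>Ucol. colouring d Ucol U \<and>
           homogeneous_colouring \<eta> d j (\<lambda>i. Ccol i \<union> Ucol i) (C \<union> U)"
proof -
  interpret previsible_extension d j \<eta> C U Ccol
    using assms by unfold_locales
  show ?thesis
    by (rule homogeneous_extension)
qed

end
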